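(* Let $f:F\to F'$ be a morphism of hyperfields, where $F$ is a topological hyperfield. Let $*\in\{s,w\}$ and $M\in\operatorname{Gr}^*(r,F'^n)$. Then the identity maps $$\operatorname{Real}^*_{{}_0F}(M)\to\operatorname{Real}^*_F(M)\to\operatorname{Real}^*_{F_0}(M)$$ are homeomorphisms.
   Context: Hyperfields. A hyperfield $(F,\odot,\boxplus,1,0)$ has the following data and axioms. - $\odot$ is a commutative multiplication and $\boxplus$ is a hyperaddition assigning to each $x,y$ a nonempty subset $x\boxplus y\subseteq F$ (extended to subsets by unions). - $\boxplus$ is commutative and associative, and $x\boxplus 0=\{x\}$. - Each $x$ has a unique $-x$ with $0\in x\boxplus(-x)$, and $x\in y\boxplus z \iff z\in x\boxplus(-y)$. - $(F\setminus\{0\},\odot,1)$ is an abelian group $F^\times$, $0\odot x=0$, and $x\odot(y\boxplus z)=(x\odot y)\boxplus(x\odot z)$. A homomorphism (morphism) $h$ satisfies $h(0)=0$, $h(1)=1$, $h(xy)=h(x)h(y)$ and $h(x\boxplus y)\subseteq h(x)\boxplus h(y)$. Topological hyperfields. A topological hyperfield is a hyperfield with a topology $T$ in which $F\setminus\{0\}$ is open, multiplication is continuous, and inversion on $F^\times$ is continuous. - ${}_0F$ is $F$ with the 0-fine topology: $V\subseteq F$ is open iff $V\setminus\{0\}\in T$. - $F_0$ is $F$ with the 0-coarse topology: the open sets are $F$ and all $U\in T$ with $0\notin U$. Grassmannians. A strong Grassmann–Plücker (GP) function of rank $r$ on $E=\{1,\dots,n\}$ is a function $\varphi:E^r\to F$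 with the following properties. - $\varphi$ is not identically $0$. - $\varphi$ is alternating. - For all $(i_1,\dots,i_{r+1})\in E^{r+1}$ and $(j_1,\dots,j_{r-1})\in E^{r-1}$: $$0\in\boxplus_{k=1}^{r+1}(-1)^k\varphi(i_1,\dots,\widehat{i_k},\dots,i_{r+1})\odot\varphi(i_k,j_1,\dots,j_{r-1}).$$ A weak GP function is a function $\varphi:E^r\to F$ with the following properties. - $\varphi$ is nonzero and alternating. - Its support is the set of bases of a matroid. - The relation holds whenever $|\{i\}\setminus\{j\}|=3$. $\operatorname{Gr}^s(r,F^n)$ and $\operatorname{Gr}^w(r,F^n)$ are the sets of classes of strong, resp. weak, GP functions modulo $\varphi\sim\alpha\varphi$, $\alpha\in F^\times$. For topological $F$ they have the subspace topology of $(F^{E^r}\setminus\{0\})/F^\times$, which carries the product and quotient topologies. Realization spaces. A morphism $f$ induces $\operatorname{Gr}^*(f):[\varphi]\mapsto[f\circ\varphi]$. For $M\in\operatorname{Gr}^*(r,F'^n)$, the realization space $\operatorname{Real}^*_F(M)=\operatorname{Gr}^*(f)^{-1}(M)\subseteq\operatorname{Gr}^*(r,F^n)$ has the subspace topology; the subscript indicates which topology on $F$ is used. *)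

theory Defs
  imports "HOL-Analysis.Analysis" "HOL-Combinatorics.Permutations"
begin

text \<open>A hyperfield whose underlying set is the whole type 'a.\<close>
record 'a hstruct =
  hmul :: "'a \<Rightarrow> 'a \<Rightarrow> 'a"
  hadd :: "'a \<Rightarrow> 'a \<Rightarrow> 'a set"
  hone :: 'a
  hzero :: 'a

definition hsadd :: "'a hstruct \<Rightarrow> 'a set \<Rightarrow> 'a set \<Rightarrow> 'a set" where
  "hsadd F A B = (\<Union>a\<in>A. \<Union>b\<in>B. hadd F a b)"

definition hneg :: "'a hstruct \<Rightarrow> 'a \<Rightarrow> 'a" where
  "hneg F x = (THE y. hzero F \<in> hadd F x y)"

definition hinv :: "'a hstruct \<Rightarrow> 'a \<Rightarrow> 'a" where
  "hinv F x = (THE y. hmul F x y = hone F)"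

definition hyperfield :: "'a hstruct \<Rightarrow> bool" where
  "hyperfield F \<longleftrightarrow>
     (\<forall>x y. hadd F x y \<noteq> {}) \<and>
     (\<forall>x y. hadd F x y = hadd F y x) \<and>
     (\<forall>x y z. hsadd F (hadd F x y) {z} = hsadd F {x} (hadd F y z)) \<and>
     (\<forall>x. hadd F x (hzero F) = {x}) \<and>
     (\<forall>x. \<exists>!y. hzero F \<in> hadd F x y) \<and>
     (\<forall>x y z. x \<in> hadd F y z \<longleftrightarrow> z \<in> hadd F x (hneg F y)) \<and>
     (\<forall>x y. hmul F x y = hmul F y x) \<and>
     (\<forall>x y z. hmul F (hmul F x y) z = hmul F x (hmul F y z)) \<and>
     hone F \<noteq> hzero F \<and>
     (\<forall>x y. x \<noteq> hzero F \<longrightarrow> y \<noteq> hzero F \<longrightarrow> hmul F x y \<noteq> hzero F) \<and>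
     (\<forall>x. hmul F (hone F) x = x) \<and>
     (\<forall>x. x \<noteq> hzero F \<longrightarrow> (\<exists>y. hmul F x y = hone F)) \<and>
     (\<forall>x. hmul F (hzero F) x = hzero F) \<and>
     (\<forall>x y z. hmul F x ` hadd F y z = hadd F (hmul F x y) (hmul F x z))"

definition hmorphism :: "'a hstruct \<Rightarrow> 'b hstruct \<Rightarrow> ('a \<Rightarrow> 'b) \<Rightarrow> bool" where
  "hmorphism F F' h \<longleftrightarrow>
     h (hzero F) = hzero F' \<and> h (hone F) = hone F' \<and>
     (\<forall>x y. h (hmul F x y) = hmul F' (h x) (h y)) \<and>
     (\<forall>x y. h ` hadd F x y \<subseteq> hadd F' (h x) (h y))"

definition top_hyperfield :: "'a hstruct \<Rightarrow> 'a topology \<Rightarrow> bool" where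
  "top_hyperfield F T \<longleftrightarrow>
     hyperfield F \<and> topspace T = UNIV \<and> openin T (- {hzero F}) \<and>
     continuous_map (prod_topology T T) T (\<lambda>(x, y). hmul F x y) \<and>
     continuous_map (subtopology T (- {hzero F})) (subtopology T (- {hzero F})) (hinv F)"

definition zero_fine :: "'a hstruct \<Rightarrow> 'a topology \<Rightarrow> 'a topology" where
  "zero_fine F T = topology (\<lambda>V. openin T (V - {hzero F}))"

definition zero_coarse :: "'a hstruct \<Rightarrow> 'a topology \<Rightarrow> 'a topology" where
  "zero_coarse F T = topology (\<lambda>U. U = UNIV \<or> (openin T U \<and> hzero F \<notin> U))"

text \<open>E^r with E = {1..n}, represented by lists of length r.\<close>
definition tuples :: "nat \<Rightarrow> nat \<Rightarrow> nat list set" where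
  "tuples n r = {xs. length xs = r \<and> set xs \<subseteq> {1..n}}"

definition hsgn :: "'a hstruct \<Rightarrow> (nat \<Rightarrow> nat) \<Rightarrow> 'a \<Rightarrow> 'a" where
  "hsgn F \<sigma> x = (if evenperm \<sigma> then x else hneg F x)"

definition alternating :: "'a hstruct \<Rightarrow> nat \<Rightarrow> nat \<Rightarrow> (nat list \<Rightarrow> 'a) \<Rightarrow> bool" where
  "alternating F n r \<phi> \<longleftrightarrow>
     (\<forall>i\<in>tuples n r.
        (\<forall>\<sigma>. \<sigma> permutes {..<r} \<longrightarrow> \<phi> (map (\<lambda>k. i ! \<sigma> k) [0..<r]) = hsgn F \<sigma> (\<phi> i)) \<and>
        (\<forall>a<r. \<forall>b<r. a \<noteq> b \<and> i ! a = i ! b \<longrightarrow> \<phi> i = hzero F))"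

fun hsum :: "'a hstruct \<Rightarrow> 'a list \<Rightarrow> 'a set" where
  "hsum F [] = {hzero F}"
| "hsum F (x # xs) = hsadd F {x} (hsum F xs)"

definition hsignpow :: "'a hstruct \<Rightarrow> nat \<Rightarrow> 'a \<Rightarrow> 'a" where
  "hsignpow F k x = (if even k then x else hneg F x)"

text \<open>The GP relation for i = (i_1..i_{r+1}) and j = (j_1..j_{r-1}), k = 1..r+1.\<close>
definition gp_rel :: "'a hstruct \<Rightarrow> nat \<Rightarrow> (nat list \<Rightarrow> 'a) \<Rightarrow> nat list \<Rightarrow> nat list \<Rightarrow> bool" where
  "gp_rel F r \<phi> i j \<longleftrightarrow>
     hzero F \<in> hsum F (map (\<lambda>k. hsignpow F k
        (hmul F (\<phi> (take (k - 1) i @ drop k i)) (\<phi> ((i ! (k - 1)) # j)))) [1..<r + 2])"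

definition nonzero_fun :: "'a hstruct \<Rightarrow> nat \<Rightarrow> nat \<Rightarrow> (nat list \<Rightarrow> 'a) \<Rightarrow> bool" where
  "nonzero_fun F n r \<phi> \<longleftrightarrow> (\<exists>i\<in>tuples n r. \<phi> i \<noteq> hzero F)"

definition matroid_bases :: "'e set \<Rightarrow> 'e set set \<Rightarrow> bool" where
  "matroid_bases E B \<longleftrightarrow> B \<noteq> {} \<and> (\<forall>b\<in>B. b \<subseteq> E) \<and>
     (\<forall>B1\<in>B. \<forall>B2\<in>B. \<forall>x\<in>B1 - B2. \<exists>y\<in>B2 - B1. insert y (B1 - {x}) \<in> B)"

definition strong_gp :: "'a hstruct \<Rightarrow> nat \<Rightarrow> nat \<Rightarrow> (nat list \<Rightarrow> 'a) \<Rightarrow> bool" where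
  "strong_gp F n r \<phi> \<longleftrightarrow>
     \<phi> \<in> extensional (tuples n r) \<and> nonzero_fun F n r \<phi> \<and> alternating F n r \<phi> \<and>
     (0 < r \<longrightarrow> (\<forall>i\<in>tuples n (r + 1). \<forall>j\<in>tuples n (r - 1). gp_rel F r \<phi> i j))"

definition weak_gp :: "'a hstruct \<Rightarrow> nat \<Rightarrow> nat \<Rightarrow> (nat list \<Rightarrow> 'a) \<Rightarrow> bool" where
  "weak_gp F n r \<phi> \<longleftrightarrow>
     \<phi> \<in> extensional (tuples n r) \<and> nonzero_fun F n r \<phi> \<and> alternating F n r \<phi> \<and>
     matroid_bases {1..n} {set i | i. i \<in> tuples n r \<and> \<phi> i \<noteq> hzero F} \<and>
     (0 < r \<longrightarrow> (\<forall>i\<in>tuples n (r + 1). \<forall>j\<in>tuples n (r - 1).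
        card (set i - set j) = 3 \<longrightarrow> gp_rel F r \<phi> i j))"

datatype gp_kind = Strong | Weak

definition is_gp :: "gp_kind \<Rightarrow> 'a hstruct \<Rightarrow> nat \<Rightarrow> nat \<Rightarrow> (nat list \<Rightarrow> 'a) \<Rightarrow> bool" where
  "is_gp k F n r \<phi> = (case k of Strong \<Rightarrow> strong_gp F n r \<phi> | Weak \<Rightarrow> weak_gp F n r \<phi>)"

definition gp_class :: "'a hstruct \<Rightarrow> nat \<Rightarrow> nat \<Rightarrow> (nat list \<Rightarrow> 'a) \<Rightarrow> (nat list \<Rightarrow> 'a) set" where
  "gp_class F n r \<phi> = {restrict (\<lambda>i. hmul F \<alpha> (\<phi> i)) (tuples n r) | \<alpha>. \<alpha> \<noteq> hzero F}"

definition Gr :: "gp_kind \<Rightarrow> 'a hstruct \<Rightarrow> nat \<Rightarrow> nat \<Rightarrow> (nat list \<Rightarrow> 'a) set set" where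
  "Gr k F n r = gp_class F n r ` {\<phi>. is_gp k F n r \<phi>}"

definition nzvecs :: "'a hstruct \<Rightarrow> nat \<Rightarrow> nat \<Rightarrow> (nat list \<Rightarrow> 'a) set" where
  "nzvecs F n r = (tuples n r \<rightarrow>\<^sub>E UNIV) - {restrict (\<lambda>_. hzero F) (tuples n r)}"

definition nzvec_top :: "'a hstruct \<Rightarrow> 'a topology \<Rightarrow> nat \<Rightarrow> nat \<Rightarrow> (nat list \<Rightarrow> 'a) topology" where
  "nzvec_top F T n r = subtopology (product_topology (\<lambda>_. T) (tuples n r)) (nzvecs F n r)"

definition proj_top :: "'a hstruct \<Rightarrow> 'a topology \<Rightarrow> nat \<Rightarrow> nat \<Rightarrow> (nat list \<Rightarrow> 'a) set topology" where
  "proj_top F T n r = topology (\<lambda>U. U \<subseteq> gp_class F n r ` nzvecs F n r \<and>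
      openin (nzvec_top F T n r) {\<phi> \<in> nzvecs F n r. gp_class F n r \<phi> \<in> U})"

definition Gr_top :: "gp_kind \<Rightarrow> 'a hstruct \<Rightarrow> 'a topology \<Rightarrow> nat \<Rightarrow> nat \<Rightarrow> (nat list \<Rightarrow> 'a) set topology" where
  "Gr_top k F T n r = subtopology (proj_top F T n r) (Gr k F n r)"

text \<open>Gr(f): [\<phi>] \<mapsto> [f o \<phi>]; Real(M) = Gr(f)^{-1}(M).\<close>
definition Real_set :: "gp_kind \<Rightarrow> 'a hstruct \<Rightarrow> 'b hstruct \<Rightarrow> ('a \<Rightarrow> 'b) \<Rightarrow> nat \<Rightarrow> nat
    \<Rightarrow> (nat list \<Rightarrow> 'b) set \<Rightarrow> (nat list \<Rightarrow> 'a) set set" where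
  "Real_set k F F' f n r M =
     {C \<in> Gr k F n r. \<exists>\<phi>\<in>C. gp_class F' n r (restrict (f \<circ> \<phi>) (tuples n r)) = M}"

definition Real_top :: "gp_kind \<Rightarrow> 'a hstruct \<Rightarrow> 'a topology \<Rightarrow> 'b hstruct \<Rightarrow> ('a \<Rightarrow> 'b) \<Rightarrow> nat \<Rightarrow> nat
    \<Rightarrow> (nat list \<Rightarrow> 'b) set \<Rightarrow> (nat list \<Rightarrow> 'a) set topology" where
  "Real_top k F T F' f n r M = subtopology (Gr_top k F T n r) (Real_set k F F' f n r M)"

end

theory Submission
  imports Defs
begin

text \<open>
  The topologies \<open>T\<close>, \<open>\<^sub>0F\<close> and \<open>F\<^sub>0\<close> have the same subspace topology on \<open>F\<^sup>\<times>\<close>, and all three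
  induce the discrete topology on \<open>{0}\<close>. Since a morphism of hyperfields reflects zero, every
  representative \<open>\<phi>\<close> of a point of \<open>Real(M)\<close> has the zero pattern of \<open>M\<close>; so the preimage of
  \<open>Real(M)\<close> lies in a product of copies of \<open>{0}\<close> and \<open>F\<^sup>\<times>\<close>, where the three product topologies
  coincide. Because scaling by units is a homeomorphism in each of the three topologies, the
  quotient map onto the projective space is open, so the topology of \<open>Real(M)\<close> is determined by
  the subspace topology on this preimage. Hence the three topologies on \<open>Real(M)\<close> are equal.
\<close>

lemma hyperfield_mul_axioms:
  assumes "hyperfield F"
  shows "\<forall>x y. hmul F x y = hmul F y x"
    and "\<forall>x y z. hmul F (hmul F x y) z = hmul F x (hmul F y z)"
    and "hone F \<noteq> hzero F"
    and "\<forall>x y. x \<noteq> hzero F \<longrightarrow> y \<noteq> hzero F \<longrightarrow> hmul F x y \<noteq> hzero F"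
    and "\<forall>x. hmul F (hone F) x = x"
    and "\<forall>x. x \<noteq> hzero F \<longrightarrow> (\<exists>y. hmul F x y = hone F)"
    and "\<forall>x. hmul F (hzero F) x = hzero F"
  using assms unfolding hyperfield_def
  apply -
  apply (elim conjE, assumption)+
  done

lemma hyperfield_mul_comm: "hyperfield F \<Longrightarrow> hmul F x y = hmul F y x"
  using hyperfield_mul_axioms(1) by blast

lemma hyperfield_mul_assoc: "hyperfield F \<Longrightarrow> hmul F (hmul F x y) z = hmul F x (hmul F y z)"
  using hyperfield_mul_axioms(2) by blast

lemma hyperfield_one_neq_zero: "hyperfield F \<Longrightarrow> hone F \<noteq> hzero F"
  using hyperfield_mul_axioms(3) by blast

lemma hyperfield_mul_one_left: "hyperfield F \<Longrightarrow> hmul F (hone F) x = x"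
  using hyperfield_mul_axioms(5) by blast

lemma hyperfield_mul_zero_left: "hyperfield F \<Longrightarrow> hmul F (hzero F) x = hzero F"
  using hyperfield_mul_axioms(7) by blast

lemma hyperfield_mul_zero_right: "hyperfield F \<Longrightarrow> hmul F x (hzero F) = hzero F"
  by (metis hyperfield_mul_comm hyperfield_mul_zero_left)

lemma hyperfield_mul_eq_zero_iff:
  "hyperfield F \<Longrightarrow> hmul F x y = hzero F \<longleftrightarrow> x = hzero F \<or> y = hzero F"
  using hyperfield_mul_axioms(4) hyperfield_mul_zero_left hyperfield_mul_zero_right by metis

lemma hyperfield_left_inverse:
  assumes "hyperfield F" "x \<noteq> hzero F"
  obtains y where "y \<noteq> hzero F" "hmul F y x = hone F"
proof -
  have "\<exists>y. hmul F x y = hone F"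
    using assms hyperfield_mul_axioms(6) by blast
  then show thesis
    using that assms(1) hyperfield_mul_comm hyperfield_mul_zero_left hyperfield_one_neq_zero
    by metis
qed

lemma hmorphism_eq_zero_iff:
  assumes "hyperfield F" "hyperfield F'" "hmorphism F F' f"
  shows "f x = hzero F' \<longleftrightarrow> x = hzero F"
proof
  assume fx: "f x = hzero F'"
  show "x = hzero F"
  proof (rule ccontr)
    assume "x \<noteq> hzero F"
    then obtain y where "hmul F y x = hone F"
      using hyperfield_left_inverse[OF assms(1)] by blast
    then have "hmul F' (f y) (f x) = hone F'"
      using assms(3) unfolding hmorphism_def by metis
    then show False
      using fx assms(2) hyperfield_mul_zero_right hyperfield_one_neq_zero by metis
  qed
next
  show "x = hzero F \<Longrightarrow> f x = hzero F'"
    using assms(3) unfolding hmorphism_def by blast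
qed

definition hscale :: "'a hstruct \<Rightarrow> nat \<Rightarrow> nat \<Rightarrow> 'a \<Rightarrow> (nat list \<Rightarrow> 'a) \<Rightarrow> nat list \<Rightarrow> 'a" where
  "hscale F n r a \<phi> = restrict (\<lambda>i. hmul F a (\<phi> i)) (tuples n r)"

lemma gp_class_eq_hscale_orbit: "gp_class F n r \<phi> = {hscale F n r a \<phi> | a. a \<noteq> hzero F}"
  unfolding gp_class_def hscale_def by simp

lemma hscale_hscale:
  "hyperfield F \<Longrightarrow> hscale F n r a (hscale F n r b \<phi>) = hscale F n r (hmul F a b) \<phi>"
  unfolding hscale_def by (auto simp: hyperfield_mul_assoc)

lemma hscale_one:
  "hyperfield F \<Longrightarrow> \<phi> \<in> extensional (tuples n r) \<Longrightarrow> hscale F n r (hone F) \<phi> = \<phi>"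
  unfolding hscale_def by (auto simp: hyperfield_mul_one_left extensional_def)

lemma hscale_inverse:
  assumes "hyperfield F" "hmul F b a = hone F" "\<phi> \<in> extensional (tuples n r)"
  shows "hscale F n r b (hscale F n r a \<phi>) = \<phi>"
  using assms by (simp add: hscale_hscale hscale_one)

lemma gp_class_hscale:
  assumes hf: "hyperfield F" and a: "a \<noteq> hzero F"
  shows "gp_class F n r (hscale F n r a \<phi>) = gp_class F n r \<phi>"
proof -
  obtain b where b: "b \<noteq> hzero F" "hmul F b a = hone F"
    using hyperfield_left_inverse[OF hf a] by blast
  have "hscale F n r c (hscale F n r a \<phi>) \<in> gp_class F n r \<phi>" if "c \<noteq> hzero F" for c
    using that a hf
    by (auto simp: gp_class_eq_hscale_orbit hscale_hscale hyperfield_mul_eq_zero_iff)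
  moreover have "hscale F n r c \<phi> \<in> gp_class F n r (hscale F n r a \<phi>)" if "c \<noteq> hzero F" for c
  proof -
    have "hmul F (hmul F c b) a = c"
      using b(2) hf by (metis hyperfield_mul_assoc hyperfield_mul_comm hyperfield_mul_one_left)
    then have "hscale F n r c \<phi> = hscale F n r (hmul F c b) (hscale F n r a \<phi>)"
      by (simp add: hscale_hscale[OF hf])
    then show ?thesis
      using that b(1) hf by (auto simp: gp_class_eq_hscale_orbit hyperfield_mul_eq_zero_iff)
  qed
  ultimately show ?thesis
    unfolding gp_class_eq_hscale_orbit[of F n r "hscale F n r a \<phi>"]
      gp_class_eq_hscale_orbit[of F n r \<phi>] by blast
qed

lemma self_in_gp_class:
  assumes "hyperfield F" "\<phi> \<in> extensional (tuples n r)"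
  shows "\<phi> \<in> gp_class F n r \<phi>"
proof -
  have "hscale F n r (hone F) \<phi> = \<phi>"
    using assms by (rule hscale_one)
  then show ?thesis
    using hyperfield_one_neq_zero[OF assms(1)] unfolding gp_class_eq_hscale_orbit by force
qed

lemma gp_class_eq_iff:
  assumes hf: "hyperfield F" and "\<psi> \<in> extensional (tuples n r)"
  shows "gp_class F n r \<phi> = gp_class F n r \<psi> \<longleftrightarrow> (\<exists>a. a \<noteq> hzero F \<and> \<psi> = hscale F n r a \<phi>)"
proof
  assume "gp_class F n r \<phi> = gp_class F n r \<psi>"
  then have "\<psi> \<in> gp_class F n r \<phi>"
    using self_in_gp_class[OF assms] by simp
  then show "\<exists>a. a \<noteq> hzero F \<and> \<psi> = hscale F n r a \<phi>"
    unfolding gp_class_eq_hscale_orbit by blast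
next
  assume "\<exists>a. a \<noteq> hzero F \<and> \<psi> = hscale F n r a \<phi>"
  then obtain a where "a \<noteq> hzero F" "\<psi> = hscale F n r a \<phi>" by blast
  then show "gp_class F n r \<phi> = gp_class F n r \<psi>"
    using gp_class_hscale[OF hf] by simp
qed

lemma nzvecs_iff:
  "\<phi> \<in> nzvecs F n r \<longleftrightarrow> \<phi> \<in> extensional (tuples n r) \<and> (\<exists>i\<in>tuples n r. \<phi> i \<noteq> hzero F)"
  unfolding nzvecs_def by (auto simp: PiE_iff extensional_def)

lemma hscale_in_nzvecs:
  "hyperfield F \<Longrightarrow> a \<noteq> hzero F \<Longrightarrow> \<phi> \<in> nzvecs F n r \<Longrightarrow> hscale F n r a \<phi> \<in> nzvecs F n r"
  unfolding nzvecs_iff hscale_def by (auto simp: hyperfield_mul_eq_zero_iff)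

lemma is_gp_in_nzvecs: "is_gp k F n r \<phi> \<Longrightarrow> \<phi> \<in> nzvecs F n r"
  by (cases k) (auto simp: is_gp_def strong_gp_def weak_gp_def nzvecs_iff nonzero_fun_def)

lemma Gr_subset_proj: "Gr k F n r \<subseteq> gp_class F n r ` nzvecs F n r"
  unfolding Gr_def using is_gp_in_nzvecs by blast

lemma Real_set_zero_pattern:
  assumes hf: "hyperfield F" and hf': "hyperfield F'" and f: "hmorphism F F' f"
    and \<mu>: "\<mu> \<in> extensional (tuples n r)" "M = gp_class F' n r \<mu>"
    and R: "gp_class F n r \<phi> \<in> Real_set k F F' f n r M"
    and i: "i \<in> tuples n r"
  shows "\<phi> i = hzero F \<longleftrightarrow> \<mu> i = hzero F'"
proof -
  obtain \<psi> where \<psi>: "\<psi> \<in> gp_class F n r \<phi>"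
    and M: "gp_class F' n r (restrict (f \<circ> \<psi>) (tuples n r)) = M"
    using R unfolding Real_set_def by blast
  obtain a where a: "a \<noteq> hzero F" "\<psi> = hscale F n r a \<phi>"
    using \<psi> unfolding gp_class_eq_hscale_orbit by blast
  obtain b where b: "b \<noteq> hzero F'" "restrict (f \<circ> \<psi>) (tuples n r) = hscale F' n r b \<mu>"
    using M \<mu> gp_class_eq_iff[OF hf'] by (metis restrict_extensional)
  then have "f (hmul F a (\<phi> i)) = hmul F' b (\<mu> i)"
    using i a(2) unfolding hscale_def by (metis comp_apply restrict_apply')
  then show ?thesis
    using a(1) b(1) hf hf' hmorphism_eq_zero_iff[OF hf hf' f] hyperfield_mul_eq_zero_iff by metis
qed

lemma openin_zero_fine: "openin (zero_fine F T) V \<longleftrightarrow> openin T (V - {hzero F})"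
proof -
  have "istopology (\<lambda>V. openin T (V - {hzero F}))"
    unfolding istopology_def
  proof (intro conjI allI impI)
    fix S U assume "openin T (S - {hzero F})" "openin T (U - {hzero F})"
    then have "openin T ((S - {hzero F}) \<inter> (U - {hzero F}))" by blast
    moreover have "(S - {hzero F}) \<inter> (U - {hzero F}) = S \<inter> U - {hzero F}" by blast
    ultimately show "openin T (S \<inter> U - {hzero F})" by simp
  next
    fix K assume "\<forall>S\<in>K. openin T (S - {hzero F})"
    then have "openin T (\<Union>S\<in>K. S - {hzero F})" by blast
    moreover have "(\<Union>S\<in>K. S - {hzero F}) = \<Union>K - {hzero F}" by blast
    ultimately show "openin T (\<Union>K - {hzero F})" by simp
  qed
  then show ?thesis
    unfolding zero_fine_def by simp
qed

lemma openin_zero_coarse: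
  "openin (zero_coarse F T) U \<longleftrightarrow> U = UNIV \<or> (openin T U \<and> hzero F \<notin> U)"
proof -
  have "istopology (\<lambda>U. U = UNIV \<or> (openin T U \<and> hzero F \<notin> U))"
    unfolding istopology_def
  proof (intro conjI allI impI)
    fix K assume K: "\<forall>S\<in>K. S = UNIV \<or> (openin T S \<and> hzero F \<notin> S)"
    show "\<Union>K = UNIV \<or> (openin T (\<Union>K) \<and> hzero F \<notin> \<Union>K)"
      using K by (cases "UNIV \<in> K") auto
  qed auto
  then show ?thesis
    unfolding zero_coarse_def by simp
qed

definition unit_scaling_continuous :: "'a hstruct \<Rightarrow> 'a topology \<Rightarrow> bool" where
  "unit_scaling_continuous F X \<longleftrightarrow>
     topspace X = UNIV \<and> (\<forall>a. a \<noteq> hzero F \<longrightarrow> continuous_map X X (hmul F a))"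

lemma unit_scaling_continuous_top_hyperfield:
  assumes "top_hyperfield F T"
  shows "unit_scaling_continuous F T"
proof -
  have mul: "continuous_map (prod_topology T T) T (\<lambda>(x, y). hmul F x y)"
    and T: "topspace T = UNIV"
    using assms unfolding top_hyperfield_def by auto
  have "continuous_map T T (hmul F a)" for a
  proof -
    have "continuous_map T (prod_topology T T) (\<lambda>x. (a, x))"
      by (simp add: T continuous_map_pairwise o_def)
    from continuous_map_compose[OF this mul] show ?thesis
      by (simp add: o_def)
  qed
  then show ?thesis
    using T unfolding unit_scaling_continuous_def by blast
qed

lemma continuous_map_zero_fine:
  assumes T: "topspace T = UNIV" "openin T (- {hzero F})"
    and g: "continuous_map T T g" "\<And>x. g x = hzero F \<longleftrightarrow> x = hzero F"
  shows "continuous_map (zero_fine F T) (zero_fine F T) g"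
proof -
  have top: "topspace (zero_fine F T) = UNIV"
    using openin_subset[of "zero_fine F T" UNIV] T(2) by (auto simp: openin_zero_fine Compl_eq_Diff_UNIV)
  have "openin T ({x. g x \<in> U} - {hzero F})" if "openin T (U - {hzero F})" for U
  proof -
    have "{x. g x \<in> U} - {hzero F} = {x \<in> topspace T. g x \<in> U - {hzero F}}"
      using g(2) T(1) by auto
    then show ?thesis
      using openin_continuous_map_preimage[OF g(1) that] by simp
  qed
  then show ?thesis
    unfolding continuous_map_def by (simp add: top openin_zero_fine)
qed

lemma continuous_map_zero_coarse:
  assumes T: "topspace T = UNIV" and g: "continuous_map T T g" "g (hzero F) = hzero F"
  shows "continuous_map (zero_coarse F T) (zero_coarse F T) g"
proof -
  have top: "topspace (zero_coarse F T) = UNIV"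
    using openin_subset[of "zero_coarse F T" UNIV] by (auto simp: openin_zero_coarse)
  have "openin T {x. g x \<in> U}" if "openin T U" for U
    using openin_continuous_map_preimage[OF g(1) that] T by simp
  then show ?thesis
    unfolding continuous_map_def using g(2) by (auto simp: top openin_zero_coarse)
qed

lemma unit_scaling_continuous_zero_fine:
  assumes "top_hyperfield F T"
  shows "unit_scaling_continuous F (zero_fine F T)"
proof -
  have "hyperfield F" "topspace T = UNIV" "openin T (- {hzero F})"
    using assms unfolding top_hyperfield_def by auto
  then show ?thesis
    using unit_scaling_continuous_top_hyperfield[OF assms] openin_subset[of "zero_fine F T" UNIV]
    unfolding unit_scaling_continuous_def
    by (auto intro!: continuous_map_zero_fine
        simp: hyperfield_mul_eq_zero_iff openin_zero_fine Compl_eq_Diff_UNIV)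
qed

lemma unit_scaling_continuous_zero_coarse:
  assumes "top_hyperfield F T"
  shows "unit_scaling_continuous F (zero_coarse F T)"
proof -
  have "hyperfield F"
    using assms unfolding top_hyperfield_def by auto
  then show ?thesis
    using unit_scaling_continuous_top_hyperfield[OF assms] openin_subset[of "zero_coarse F T" UNIV]
    unfolding unit_scaling_continuous_def
    by (auto intro!: continuous_map_zero_coarse simp: hyperfield_mul_zero_right openin_zero_coarse)
qed

lemma subtopology_eq_if_openin_eq:
  assumes "openin X S" "openin Y S" "\<And>U. U \<subseteq> S \<Longrightarrow> openin X U \<longleftrightarrow> openin Y U"
  shows "subtopology X S = subtopology Y S"
  unfolding topology_eq using assms by (auto simp: openin_open_subtopology)

lemma subtopology_zero_fine_units:
  assumes "openin T (- {hzero F})"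
  shows "subtopology (zero_fine F T) (- {hzero F}) = subtopology T (- {hzero F})"
proof (rule subtopology_eq_if_openin_eq)
  show "openin (zero_fine F T) (- {hzero F})"
    using assms by (simp add: openin_zero_fine Compl_eq_Diff_UNIV)
  show "openin (zero_fine F T) U \<longleftrightarrow> openin T U" if "U \<subseteq> - {hzero F}" for U
    using that by (simp add: openin_zero_fine subset_Compl_singleton)
qed (fact assms)

lemma subtopology_zero_coarse_units:
  assumes "openin T (- {hzero F})"
  shows "subtopology (zero_coarse F T) (- {hzero F}) = subtopology T (- {hzero F})"
  using assms by (intro subtopology_eq_if_openin_eq) (auto simp: openin_zero_coarse)

lemma topspace_nzvec_top: "topspace X = UNIV \<Longrightarrow> topspace (nzvec_top F X n r) = nzvecs F n r"
  unfolding nzvec_top_def nzvecs_def by (auto simp: topspace_product_topology)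

lemma continuous_map_hscale:
  assumes hf: "hyperfield F" and X: "unit_scaling_continuous F X" and a: "a \<noteq> hzero F"
  shows "continuous_map (nzvec_top F X n r) (nzvec_top F X n r) (hscale F n r a)"
proof -
  let ?P = "product_topology (\<lambda>_. X) (tuples n r)"
  have mul: "continuous_map X X (hmul F a)" and top: "topspace X = UNIV"
    using X a unfolding unit_scaling_continuous_def by auto
  have "continuous_map ?P X (\<lambda>\<phi>. hscale F n r a \<phi> i)" if i: "i \<in> tuples n r" for i
  proof -
    have "(\<lambda>\<phi>. hscale F n r a \<phi> i) = hmul F a \<circ> (\<lambda>\<phi>. \<phi> i)"
      using i unfolding hscale_def by auto
    then show ?thesis
      using continuous_map_compose[OF continuous_map_product_projection[OF i] mul] by simp
  qed
  then have "continuous_map ?P ?P (hscale F n r a)"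
    unfolding continuous_map_componentwise by (auto simp: hscale_def)
  then show ?thesis
    unfolding nzvec_top_def
    by (intro continuous_map_into_subtopology continuous_map_from_subtopology)
      (auto simp: topspace_product_topology top hscale_in_nzvecs[OF hf a])
qed

lemma openin_hscale_image:
  assumes hf: "hyperfield F" and X: "unit_scaling_continuous F X" and a: "a \<noteq> hzero F"
    and V: "openin (nzvec_top F X n r) V"
  shows "openin (nzvec_top F X n r) (hscale F n r a ` V)"
proof -
  obtain b where b: "b \<noteq> hzero F" "hmul F b a = hone F"
    using hyperfield_left_inverse[OF hf a] by blast
  then have ab: "hmul F a b = hone F"
    using hyperfield_mul_comm[OF hf] by metis
  have top: "topspace (nzvec_top F X n r) = nzvecs F n r"
    using X topspace_nzvec_top unfolding unit_scaling_continuous_def by blast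
  have VN: "V \<subseteq> nzvecs F n r"
    using openin_subset[OF V] top by simp
  have "hscale F n r a ` V = {\<phi> \<in> topspace (nzvec_top F X n r). hscale F n r b \<phi> \<in> V}"
  proof (intro set_eqI iffI)
    fix \<phi> assume "\<phi> \<in> hscale F n r a ` V"
    then obtain \<psi> where "\<psi> \<in> V" "\<phi> = hscale F n r a \<psi>" by blast
    moreover have "\<psi> \<in> extensional (tuples n r)"
      using \<open>\<psi> \<in> V\<close> VN nzvecs_iff by blast
    ultimately show "\<phi> \<in> {\<phi> \<in> topspace (nzvec_top F X n r). hscale F n r b \<phi> \<in> V}"
      using VN top hscale_in_nzvecs[OF hf a] hscale_inverse[OF hf b(2)] by auto
  next
    fix \<phi> assume "\<phi> \<in> {\<phi> \<in> topspace (nzvec_top F X n r). hscale F n r b \<phi> \<in> V}"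
    then have "\<phi> \<in> extensional (tuples n r)" "hscale F n r b \<phi> \<in> V"
      using top by (auto simp: nzvecs_iff)
    then show "\<phi> \<in> hscale F n r a ` V"
      using hscale_inverse[OF hf ab, of \<phi>] by (metis image_eqI)
  qed
  then show ?thesis
    using openin_continuous_map_preimage[OF continuous_map_hscale[OF hf X b(1)] V] by simp
qed

lemma openin_proj_top:
  "openin (proj_top F T n r) U \<longleftrightarrow> U \<subseteq> gp_class F n r ` nzvecs F n r \<and>
      openin (nzvec_top F T n r) {\<phi> \<in> nzvecs F n r. gp_class F n r \<phi> \<in> U}"
proof -
  let ?N = "nzvecs F n r" and ?q = "gp_class F n r" and ?X = "nzvec_top F T n r"
  have "istopology (\<lambda>U. U \<subseteq> ?q ` ?N \<and> openin ?X {\<phi> \<in> ?N. ?q \<phi> \<in> U})"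
    unfolding istopology_def
  proof (rule conjI; intro allI impI)
    fix S U assume "S \<subseteq> ?q ` ?N \<and> openin ?X {\<phi> \<in> ?N. ?q \<phi> \<in> S}"
      "U \<subseteq> ?q ` ?N \<and> openin ?X {\<phi> \<in> ?N. ?q \<phi> \<in> U}"
    moreover have "{\<phi> \<in> ?N. ?q \<phi> \<in> S \<inter> U} = {\<phi> \<in> ?N. ?q \<phi> \<in> S} \<inter> {\<phi> \<in> ?N. ?q \<phi> \<in> U}"
      by blast
    ultimately show "S \<inter> U \<subseteq> ?q ` ?N \<and> openin ?X {\<phi> \<in> ?N. ?q \<phi> \<in> S \<inter> U}"
      by auto
  next
    fix K assume "\<forall>S\<in>K. S \<subseteq> ?q ` ?N \<and> openin ?X {\<phi> \<in> ?N. ?q \<phi> \<in> S}"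
    moreover have "{\<phi> \<in> ?N. ?q \<phi> \<in> \<Union>K} = (\<Union>S\<in>K. {\<phi> \<in> ?N. ?q \<phi> \<in> S})"
      by blast
    ultimately show "\<Union>K \<subseteq> ?q ` ?N \<and> openin ?X {\<phi> \<in> ?N. ?q \<phi> \<in> \<Union>K}"
      by auto
  qed
  then show ?thesis
    unfolding proj_top_def by simp
qed

text \<open>The saturation of an open set is the union of its translates under the units.\<close>
lemma openin_proj_top_gp_class_image:
  assumes hf: "hyperfield F" and X: "unit_scaling_continuous F X"
    and V: "openin (nzvec_top F X n r) V"
  shows "openin (proj_top F X n r) (gp_class F n r ` V)"
proof -
  let ?N = "nzvecs F n r" and ?q = "gp_class F n r"
  have VN: "V \<subseteq> ?N"
    using openin_subset[OF V] X topspace_nzvec_top unfolding unit_scaling_continuous_def by blast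
  have "{\<phi> \<in> ?N. ?q \<phi> \<in> ?q ` V} = (\<Union>a\<in>{a. a \<noteq> hzero F}. hscale F n r a ` V)"
  proof (intro set_eqI iffI)
    fix \<phi> assume "\<phi> \<in> {\<phi> \<in> ?N. ?q \<phi> \<in> ?q ` V}"
    then obtain \<psi> where \<phi>: "\<phi> \<in> extensional (tuples n r)" and \<psi>: "\<psi> \<in> V" "?q \<psi> = ?q \<phi>"
      by (auto simp: nzvecs_iff)
    then obtain a where "a \<noteq> hzero F" "\<phi> = hscale F n r a \<psi>"
      using gp_class_eq_iff[OF hf \<phi>] by blast
    then show "\<phi> \<in> (\<Union>a\<in>{a. a \<noteq> hzero F}. hscale F n r a ` V)"
      using \<psi>(1) by blast
  next
    fix \<phi> assume "\<phi> \<in> (\<Union>a\<in>{a. a \<noteq> hzero F}. hscale F n r a ` V)"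
    then obtain a \<psi> where a: "a \<noteq> hzero F" and \<psi>: "\<psi> \<in> V" and \<phi>: "\<phi> = hscale F n r a \<psi>"
      by blast
    then have "\<phi> \<in> ?N" "?q \<phi> = ?q \<psi>"
      using VN hscale_in_nzvecs[OF hf a] gp_class_hscale[OF hf a] by auto
    then show "\<phi> \<in> {\<phi> \<in> ?N. ?q \<phi> \<in> ?q ` V}"
      using \<psi> by auto
  qed
  moreover have "openin (nzvec_top F X n r) (\<Union>a\<in>{a. a \<noteq> hzero F}. hscale F n r a ` V)"
    using openin_hscale_image[OF hf X _ V] by blast
  ultimately show ?thesis
    unfolding openin_proj_top using VN by (simp add: image_mono)
qed

lemma subtopology_product_topology_eq:
  assumes "A \<subseteq> (\<Pi>\<^sub>E i\<in>I. Z i)" and "\<And>i. subtopology (X i) (Z i) = subtopology (Y i) (Z i)"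
  shows "subtopology (product_topology X I) A = subtopology (product_topology Y I) A"
proof -
  have "subtopology (product_topology X I) A =
      subtopology (product_topology (\<lambda>i. subtopology (X i) (Z i)) I) A" for X
    using assms(1) by (metis inf.absorb_iff2 subtopology_product_topology subtopology_subtopology)
  from this[of X] this[of Y] show ?thesis
    using assms(2) by simp
qed

lemma Real_top_eq_subtopology_proj_top:
  "Real_top k F X F' f n r M = subtopology (proj_top F X n r) (Real_set k F F' f n r M)"
proof -
  have "Gr k F n r \<inter> Real_set k F F' f n r M = Real_set k F F' f n r M"
    unfolding Real_set_def by blast
  then show ?thesis
    unfolding Real_top_def Gr_top_def subtopology_subtopology by simp
qed

lemma openin_Real_top:
  fixes F :: "'a hstruct" and F' :: "'b hstruct" and k :: gp_kind and f n r M
  assumes hf: "hyperfield F" and X: "unit_scaling_continuous F X"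
  defines "R \<equiv> Real_set k F F' f n r M" and "q \<equiv> gp_class F n r"
    and "A \<equiv> {\<phi> \<in> nzvecs F n r. gp_class F n r \<phi> \<in> Real_set k F F' f n r M}"
  shows "openin (Real_top k F X F' f n r M) W \<longleftrightarrow>
      W \<subseteq> R \<and> openin (subtopology (product_topology (\<lambda>_. X) (tuples n r)) A) {\<phi> \<in> A. q \<phi> \<in> W}"
    (is "_ \<longleftrightarrow> _ \<and> openin (subtopology ?P A) _")
proof
  assume "openin (Real_top k F X F' f n r M) W"
  then obtain U where U: "openin (proj_top F X n r) U" and W: "W = U \<inter> R"
    unfolding Real_top_eq_subtopology_proj_top R_def openin_subtopology by blast
  obtain S where "openin ?P S" and "{\<phi> \<in> nzvecs F n r. q \<phi> \<in> U} = S \<inter> nzvecs F n r"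
    using U unfolding openin_proj_top nzvec_top_def openin_subtopology q_def by blast
  moreover have "{\<phi> \<in> A. q \<phi> \<in> W} = S \<inter> A"
    using calculation(2) W unfolding A_def q_def R_def by blast
  ultimately show "W \<subseteq> R \<and> openin (subtopology ?P A) {\<phi> \<in> A. q \<phi> \<in> W}"
    using W openin_subtopology by blast
next
  assume "W \<subseteq> R \<and> openin (subtopology ?P A) {\<phi> \<in> A. q \<phi> \<in> W}"
  then obtain S where WR: "W \<subseteq> R" and S: "openin ?P S" and SA: "{\<phi> \<in> A. q \<phi> \<in> W} = S \<inter> A"
    unfolding openin_subtopology by blast
  define V where "V = S \<inter> nzvecs F n r"
  have "openin (nzvec_top F X n r) V"
    unfolding V_def nzvec_top_def using S openin_subtopology by blast
  then have "openin (proj_top F X n r) (q ` V)"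
    unfolding q_def by (rule openin_proj_top_gp_class_image[OF hf X])
  moreover have "W = q ` V \<inter> R"
  proof (intro set_eqI iffI)
    fix C assume C: "C \<in> W"
    have "R \<subseteq> q ` nzvecs F n r"
      using Gr_subset_proj unfolding R_def Real_set_def q_def by blast
    then obtain \<phi> where \<phi>: "\<phi> \<in> nzvecs F n r" "C = q \<phi>"
      using C WR by blast
    then have "\<phi> \<in> {\<phi> \<in> A. q \<phi> \<in> W}"
      using C WR unfolding A_def R_def q_def by blast
    then have "\<phi> \<in> V"
      using SA \<phi>(1) unfolding V_def by blast
    then show "C \<in> q ` V \<inter> R"
      using C WR \<phi>(2) by blast
  next
    fix C assume "C \<in> q ` V \<inter> R"
    then show "C \<in> W"
      using SA unfolding A_def V_def q_def R_def by blast
  qed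
  ultimately show "openin (Real_top k F X F' f n r M) W"
    unfolding Real_top_eq_subtopology_proj_top R_def openin_subtopology by blast
qed

lemma Real_top_eq_if_subtopology_units_eq:
  fixes F :: "'a hstruct" and F' :: "'b hstruct"
  assumes hf: "hyperfield F" and hf': "hyperfield F'" and f: "hmorphism F F' f"
    and M: "M \<in> Gr k F' n r"
    and X: "unit_scaling_continuous F X" and Y: "unit_scaling_continuous F Y"
    and units: "subtopology X (- {hzero F}) = subtopology Y (- {hzero F})"
  shows "Real_top k F X F' f n r M = Real_top k F Y F' f n r M"
proof -
  obtain \<mu> where \<mu>: "M = gp_class F' n r \<mu>" "\<mu> \<in> extensional (tuples n r)"
    using M is_gp_in_nzvecs unfolding Gr_def nzvecs_iff by blast
  define A where "A = {\<phi> \<in> nzvecs F n r. gp_class F n r \<phi> \<in> Real_set k F F' f n r M}"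
  define Z where "Z i = (if \<mu> i = hzero F' then {hzero F} else - {hzero F})" for i
  have "A \<subseteq> (\<Pi>\<^sub>E i\<in>tuples n r. Z i)"
    using Real_set_zero_pattern[OF hf hf' f \<mu>(2,1)]
    unfolding A_def Z_def by (auto simp: nzvecs_iff PiE_iff dest: extensional_arb)
  moreover have "subtopology X (Z i) = subtopology Y (Z i)" for i
  proof -
    have "subtopology X {hzero F} = discrete_topology {hzero F}"
      "subtopology Y {hzero F} = discrete_topology {hzero F}"
      using X Y unfolding unit_scaling_continuous_def
      by (simp_all add: subtopology_eq_discrete_topology_sing)
    then show ?thesis
      using units unfolding Z_def by simp
  qed
  ultimately have "subtopology (product_topology (\<lambda>_. X) (tuples n r)) A =
      subtopology (product_topology (\<lambda>_. Y) (tuples n r)) A"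
    by (rule subtopology_product_topology_eq)
  then show ?thesis
    unfolding topology_eq openin_Real_top[OF hf X] openin_Real_top[OF hf Y] A_def by simp
qed

theorem corollary5p2:
  fixes F :: "'a hstruct" and F' :: "'b hstruct" and T :: "'a topology"
    and f :: "'a \<Rightarrow> 'b" and k :: gp_kind and n r :: nat
    and M :: "(nat list \<Rightarrow> 'b) set"
  assumes "top_hyperfield F T"
    and "hyperfield F'"
    and "hmorphism F F' f"
    and "M \<in> Gr k F' n r"
  shows "homeomorphic_map (Real_top k F (zero_fine F T) F' f n r M) (Real_top k F T F' f n r M) id
       \<and> homeomorphic_map (Real_top k F T F' f n r M) (Real_top k F (zero_coarse F T) F' f n r M) id"
proof -
  have hf: "hyperfield F" and units_open: "openin T (- {hzero F})"
    using assms(1) unfolding top_hyperfield_def by auto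
  note T = unit_scaling_continuous_top_hyperfield[OF assms(1)]
  have "Real_top k F (zero_fine F T) F' f n r M = Real_top k F T F' f n r M"
    using unit_scaling_continuous_zero_fine[OF assms(1)] T subtopology_zero_fine_units[OF units_open]
    by (rule Real_top_eq_if_subtopology_units_eq[OF hf assms(2-4)])
  moreover have "Real_top k F (zero_coarse F T) F' f n r M = Real_top k F T F' f n r M"
    using unit_scaling_continuous_zero_coarse[OF assms(1)] T subtopology_zero_coarse_units[OF units_open]
    by (rule Real_top_eq_if_subtopology_units_eq[OF hf assms(2-4)])
  ultimately show ?thesis
    by (simp add: homeomorphic_map_id)
qed

end
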